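(* Let $X$ and $Y$ be Tychonoff spaces with $Y$ a $P$-space, and let $f:X\to Y$ be a meshing map which has a cross section. Then $f|_{N(X)}$ is a homeomorphism of $N(X)$ onto $N(Y)$.
   Context: A space $X$ is Menger if for each sequence $(\mathcal{U}_n)$ of open covers of $X$ there is a sequence $(\mathcal{V}_n)$ with each $\mathcal{V}_n$ a finite subset of $\mathcal{U}_n$ and $\bigcup_{n}\bigcup\mathcal{V}_n=X$. $X$ is locally Menger at $x$ if there are an open set $U$ and a Menger subspace $M$ of $X$ with $x\in U\subseteq M$; $N(X)$ denotes the set of points of $X$ at which $X$ is not locally Menger. A $P$-space is a space in which every countable intersection of open sets is open. A continuous surjection $f:X\to Y$ is a meshing map if there are compactifications $bX$ of $X$ and $cY$ of $Y$ and a continuous extension $\tilde f:bX\to cY$ of $f$ onto $cY$ such that $\tilde f|_{bX\setminus X}$ is a homeomorphism onto $cY\setminus Y$. A cross section of $f$ is a continuous map $g:Y\to X$ with $f\circ g=\mathrm{id}_Y$. *)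

theory Defs
  imports "HOL-Analysis.Analysis"
begin

definition tychonoff_space :: "'a topology \<Rightarrow> bool" where
  "tychonoff_space X \<longleftrightarrow> completely_regular_space X \<and> Hausdorff_space X"

definition menger_space :: "'a topology \<Rightarrow> bool" where
  "menger_space X \<longleftrightarrow>
     (\<forall>\<U> :: nat \<Rightarrow> 'a set set.
        (\<forall>n. (\<forall>U\<in>\<U> n. openin X U) \<and> topspace X \<subseteq> \<Union>(\<U> n)) \<longrightarrow>
        (\<exists>\<V> :: nat \<Rightarrow> 'a set set. (\<forall>n. finite (\<V> n) \<and> \<V> n \<subseteq> \<U> n) \<and>
            topspace X \<subseteq> (\<Union>n. \<Union>(\<V> n))))"

definition locally_menger_at :: "'a topology \<Rightarrow> 'a \<Rightarrow> bool" where
  "locally_menger_at X x \<longleftrightarrow>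
     (\<exists>U M. openin X U \<and> x \<in> U \<and> U \<subseteq> M \<and> M \<subseteq> topspace X \<and>
            menger_space (subtopology X M))"

definition non_locally_menger :: "'a topology \<Rightarrow> 'a set" where
  "non_locally_menger X = {x \<in> topspace X. \<not> locally_menger_at X x}"

definition P_space :: "'a topology \<Rightarrow> bool" where
  "P_space X \<longleftrightarrow>
     (\<forall>\<U>. countable \<U> \<and> (\<forall>U\<in>\<U>. openin X U) \<longrightarrow> openin X (topspace X \<inter> \<Inter>\<U>))"

definition compactification :: "'a topology \<Rightarrow> 'c topology \<Rightarrow> ('a \<Rightarrow> 'c) \<Rightarrow> bool" where
  "compactification X K e \<longleftrightarrow>
     compact_space K \<and> Hausdorff_space K \<and> embedding_map X K e \<and>
     K closure_of (e ` topspace X) = topspace K"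

text \<open>Witness data for f being a meshing map: compactifications (BX,eX), (CY,eY)
  and a continuous extension F of f onto CY which maps the remainder of BX
  homeomorphically onto the remainder of CY.\<close>
definition meshing_data ::
  "'a topology \<Rightarrow> 'b topology \<Rightarrow> ('a \<Rightarrow> 'b) \<Rightarrow>
   'c topology \<Rightarrow> ('a \<Rightarrow> 'c) \<Rightarrow> 'd topology \<Rightarrow> ('b \<Rightarrow> 'd) \<Rightarrow> ('c \<Rightarrow> 'd) \<Rightarrow> bool" where
  "meshing_data X Y f BX eX CY eY F \<longleftrightarrow>
     continuous_map X Y f \<and> f ` topspace X = topspace Y \<and>
     compactification X BX eX \<and> compactification Y CY eY \<and>
     continuous_map BX CY F \<and> F ` topspace BX = topspace CY \<and>
     (\<forall>x\<in>topspace X. F (eX x) = eY (f x)) \<and>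
     homeomorphic_map (subtopology BX (topspace BX - eX ` topspace X))
                      (subtopology CY (topspace CY - eY ` topspace Y)) F"

definition cross_section :: "'a topology \<Rightarrow> 'b topology \<Rightarrow> ('a \<Rightarrow> 'b) \<Rightarrow> ('b \<Rightarrow> 'a) \<Rightarrow> bool" where
  "cross_section X Y f g \<longleftrightarrow> continuous_map Y X g \<and> (\<forall>y\<in>topspace Y. f (g y) = y)"

end

theory Submission
  imports Defs
begin

text \<open>
  A meshing map f is proper: the extension F is a proper map between compacta, and since F sends
  the remainder of BX into the remainder of CY, the preimage of eY(Y) under F is exactly eX(X), so
  F restricts to a proper map from eX(X) to eY(Y). Proper maps reflect local Mengerness, and a
  map with a continuous right inverse g transfers local Mengerness from g(y) to y; hence f maps
  N(X) into N(Y) and g maps N(Y) into N(X). The section image A = g(Y) is closed with f(A) = Y,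
  so F maps the compact closure of eX(A) onto CY; as F is injective on the remainder, that closure
  contains the whole remainder of BX. Points of X outside A are therefore interior points of eX(X)
  in BX, hence have compact neighbourhoods and are locally Menger. So N(X) lies in g(Y), where f
  and g are mutually inverse homeomorphisms.
\<close>

section \<open>Menger spaces\<close>

lemma menger_spaceI:
  fixes X :: "'a topology"
  assumes "\<And>\<U> :: nat \<Rightarrow> 'a set set. \<lbrakk>\<And>n. \<forall>U\<in>\<U> n. openin X U; \<And>n. topspace X \<subseteq> \<Union>(\<U> n)\<rbrakk> \<Longrightarrow>
             \<exists>\<V>. (\<forall>n. finite (\<V> n) \<and> \<V> n \<subseteq> \<U> n) \<and> topspace X \<subseteq> (\<Union>n. \<Union>(\<V> n))"
  shows "menger_space X"
  unfolding menger_space_def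
proof (intro allI impI)
  fix \<U> :: "nat \<Rightarrow> 'a set set"
  assume "\<forall>n. (\<forall>U\<in>\<U> n. openin X U) \<and> topspace X \<subseteq> \<Union>(\<U> n)"
  then show "\<exists>\<V>. (\<forall>n. finite (\<V> n) \<and> \<V> n \<subseteq> \<U> n) \<and> topspace X \<subseteq> (\<Union>n. \<Union>(\<V> n))"
    using assms[of \<U>] by simp
qed

lemma menger_spaceD:
  fixes \<U> :: "nat \<Rightarrow> 'a set set"
  assumes "menger_space X" "\<And>n. \<forall>U\<in>\<U> n. openin X U" "\<And>n. topspace X \<subseteq> \<Union>(\<U> n)"
  shows "\<exists>\<V>. (\<forall>n. finite (\<V> n) \<and> \<V> n \<subseteq> \<U> n) \<and> topspace X \<subseteq> (\<Union>n. \<Union>(\<V> n))"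
  using assms(1) unfolding menger_space_def by (simp add: assms(2,3))

lemma compact_space_imp_menger_space:
  assumes "compact_space X"
  shows "menger_space X"
proof (rule menger_spaceI)
  fix \<U> :: "nat \<Rightarrow> 'a set set"
  assume \<U>: "\<And>n. \<forall>U\<in>\<U> n. openin X U" "\<And>n. topspace X \<subseteq> \<Union>(\<U> n)"
  have "\<exists>\<F>. finite \<F> \<and> \<F> \<subseteq> \<U> n \<and> topspace X \<subseteq> \<Union>\<F>" for n
    using assms[unfolded compact_space_alt, rule_format, of "\<U> n"] \<U> by simp
  then have "\<forall>n. \<exists>\<F>. finite \<F> \<and> \<F> \<subseteq> \<U> n \<and> topspace X \<subseteq> \<Union>\<F>"
    by simp
  then obtain \<V> where \<V>: "\<forall>n. finite (\<V> n) \<and> \<V> n \<subseteq> \<U> n \<and> topspace X \<subseteq> \<Union>(\<V> n)"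
    by (rule choice[THEN exE])
  have "topspace X \<subseteq> \<Union>(\<V> 0)"
    using \<V> by simp
  also have "\<dots> \<subseteq> (\<Union>n. \<Union>(\<V> n))"
    by (rule UN_upper) simp
  finally show "\<exists>\<V>. (\<forall>n. finite (\<V> n) \<and> \<V> n \<subseteq> \<U> n) \<and> topspace X \<subseteq> (\<Union>n. \<Union>(\<V> n))"
    using \<V> by (intro exI[of _ \<V>]) simp
qed

lemma menger_space_continuous_image:
  fixes Y :: "'b topology"
  assumes f: "continuous_map X Y f" and surj: "f ` topspace X = topspace Y"
    and "menger_space X"
  shows "menger_space Y"
proof (rule menger_spaceI)
  fix \<U> :: "nat \<Rightarrow> 'b set set"
  assume \<U>: "\<And>n. \<forall>U\<in>\<U> n. openin Y U" "\<And>n. topspace Y \<subseteq> \<Union>(\<U> n)"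
  define pre where "pre U = {x \<in> topspace X. f x \<in> U}" for U
  have pre_open: "\<forall>U\<in>pre ` \<U> n. openin X U" for n
    using \<U>(1) f unfolding pre_def by (blast intro: openin_continuous_map_preimage)
  have pre_cover: "topspace X \<subseteq> \<Union>(pre ` \<U> n)" for n
  proof
    fix x assume x: "x \<in> topspace X"
    then obtain U where "U \<in> \<U> n" "f x \<in> U"
      using \<U>(2) surj by blast
    then show "x \<in> \<Union>(pre ` \<U> n)"
      using x unfolding pre_def by blast
  qed
  obtain \<V> where \<V>: "\<And>n. finite (\<V> n)" "\<And>n. \<V> n \<subseteq> pre ` \<U> n"
    and cover: "topspace X \<subseteq> (\<Union>n. \<Union>(\<V> n))"
    using menger_spaceD[where \<U>="\<lambda>n. pre ` \<U> n", OF \<open>menger_space X\<close> pre_open pre_cover] by auto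
  have "\<forall>n. \<exists>\<C>. finite \<C> \<and> \<C> \<subseteq> \<U> n \<and> \<V> n = pre ` \<C>"
    using finite_subset_image \<V> by meson
  then obtain \<C> where \<C>: "\<And>n. finite (\<C> n)" "\<And>n. \<C> n \<subseteq> \<U> n" "\<And>n. \<V> n = pre ` \<C> n"
    by metis
  have "topspace Y \<subseteq> (\<Union>n. \<Union>(\<C> n))"
  proof
    fix y assume "y \<in> topspace Y"
    then obtain x where x: "x \<in> topspace X" "y = f x" unfolding surj[symmetric] by blast
    then obtain n V where "V \<in> \<V> n" "x \<in> V" using cover by blast
    then obtain U where "U \<in> \<C> n" "x \<in> pre U" using \<C>(3) by auto
    then show "y \<in> (\<Union>n. \<Union>(\<C> n))"
      using x unfolding pre_def by blast
  qed
  then show "\<exists>\<V>. (\<forall>n. finite (\<V> n) \<and> \<V> n \<subseteq> \<U> n) \<and> topspace Y \<subseteq> (\<Union>n. \<Union>(\<V> n))"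
    using \<C>(1,2) by (intro exI[of _ \<C>]) simp
qed

definition small_image :: "'a topology \<Rightarrow> 'b topology \<Rightarrow> ('a \<Rightarrow> 'b) \<Rightarrow> 'a set \<Rightarrow> 'b set" where
  "small_image X Y f U = topspace Y - f ` (topspace X - U)"

lemma openin_small_image:
  assumes "closed_map X Y f" "openin X U"
  shows "openin Y (small_image X Y f U)"
proof -
  have "closedin X (topspace X - U)"
    using assms(2) by blast
  then have "closedin Y (f ` (topspace X - U))"
    using assms(1) unfolding closed_map_def by blast
  then show ?thesis
    unfolding small_image_def by blast
qed

lemma proper_map_small_image_cover:
  assumes f: "proper_map X Y f" and \<U>: "\<forall>U\<in>\<U>. openin X U" "topspace X \<subseteq> \<Union>\<U>"
    and y: "y \<in> topspace Y"
  obtains \<S> where "finite \<S>" "\<S> \<subseteq> \<U>" "y \<in> small_image X Y f (\<Union>\<S>)"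
proof -
  have "compactin X {x \<in> topspace X. f x = y}"
    using f y unfolding proper_map_def by blast
  moreover have "{x \<in> topspace X. f x = y} \<subseteq> \<Union>\<U>"
    using \<U>(2) by blast
  ultimately obtain \<S> where \<S>: "finite \<S>" "\<S> \<subseteq> \<U>" "{x \<in> topspace X. f x = y} \<subseteq> \<Union>\<S>"
    using \<U>(1) unfolding compactin_def by meson
  have "y \<in> small_image X Y f (\<Union>\<S>)"
    using y \<S>(3) unfolding small_image_def by auto
  with \<S>(1,2) show ?thesis
    by (rule that)
qed

lemma menger_space_proper_map_preimage:
  fixes X :: "'a topology"
  assumes f: "proper_map X Y f" and "menger_space Y"
  shows "menger_space X"
proof (rule menger_spaceI)
  fix \<U> :: "nat \<Rightarrow> 'a set set"
  assume \<U>: "\<And>n. \<forall>U\<in>\<U> n. openin X U" "\<And>n. topspace X \<subseteq> \<Union>(\<U> n)"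
  define small where "small \<S> = small_image X Y f (\<Union>\<S>)" for \<S>
  define \<W> where "\<W> n = small ` {\<S>. finite \<S> \<and> \<S> \<subseteq> \<U> n}" for n
  have \<W>_open: "\<forall>W\<in>\<W> n. openin Y W" for n
    unfolding \<W>_def small_def using \<U>(1)
    by (auto intro!: openin_small_image[OF proper_imp_closed_map[OF f]] openin_Union)
  have \<W>_cover: "topspace Y \<subseteq> \<Union>(\<W> n)" for n
  proof
    fix y assume "y \<in> topspace Y"
    then obtain \<S> where "finite \<S>" "\<S> \<subseteq> \<U> n" "y \<in> small \<S>"
      unfolding small_def by (rule proper_map_small_image_cover[OF f \<U>(1) \<U>(2)])
    then show "y \<in> \<Union>(\<W> n)"
      unfolding \<W>_def by blast
  qed
  obtain \<V> where \<V>: "\<And>n. finite (\<V> n)" "\<And>n. \<V> n \<subseteq> \<W> n"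
    and cover: "topspace Y \<subseteq> (\<Union>n. \<Union>(\<V> n))"
    using menger_spaceD[where \<U>=\<W>, OF \<open>menger_space Y\<close> \<W>_open \<W>_cover] by auto
  have "\<forall>n. \<exists>\<SS>. finite \<SS> \<and> \<SS> \<subseteq> {\<S>. finite \<S> \<and> \<S> \<subseteq> \<U> n} \<and> \<V> n = small ` \<SS>"
    using finite_subset_image \<V> unfolding \<W>_def by meson
  then obtain \<SS> where \<SS>: "\<And>n. finite (\<SS> n)" "\<And>n. \<SS> n \<subseteq> {\<S>. finite \<S> \<and> \<S> \<subseteq> \<U> n}"
      "\<And>n. \<V> n = small ` \<SS> n"
    by metis
  have "topspace X \<subseteq> (\<Union>n. \<Union>(\<Union>(\<SS> n)))"
  proof
    fix x assume x: "x \<in> topspace X"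
    then have "f x \<in> topspace Y"
      using proper_map_imp_subset_topspace[OF f] by blast
    then obtain n V where "V \<in> \<V> n" "f x \<in> V" using cover by blast
    then obtain \<S> where "\<S> \<in> \<SS> n" "f x \<in> small \<S>" using \<SS>(3) by auto
    then show "x \<in> (\<Union>n. \<Union>(\<Union>(\<SS> n)))"
      using x unfolding small_def small_image_def by blast
  qed
  moreover have "finite (\<Union>(\<SS> n))" "\<Union>(\<SS> n) \<subseteq> \<U> n" for n
    using \<SS>(1,2) by auto
  ultimately show "\<exists>\<V>. (\<forall>n. finite (\<V> n) \<and> \<V> n \<subseteq> \<U> n) \<and> topspace X \<subseteq> (\<Union>n. \<Union>(\<V> n))"
    by (intro exI[of _ "\<lambda>n. \<Union>(\<SS> n)"]) simp
qed

section \<open>Transferring local Mengerness\<close>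

lemma locally_menger_at_compact_neighbourhood:
  assumes "openin X U" "compactin X K" "x \<in> U" "U \<subseteq> K"
  shows "locally_menger_at X x"
proof -
  have "menger_space (subtopology X K)"
    by (rule compact_space_imp_menger_space[OF compact_space_subtopology[OF assms(2)]])
  with assms compactin_subset_topspace[OF assms(2)] show ?thesis
    unfolding locally_menger_at_def by (intro exI[of _ U] exI[of _ K]) simp
qed

lemma locally_menger_at_proper_map_preimage:
  assumes f: "continuous_map X Y f" "proper_map X Y f" and x: "x \<in> topspace X"
    and "locally_menger_at Y (f x)"
  shows "locally_menger_at X x"
proof -
  obtain V M where VM: "openin Y V" "f x \<in> V" "V \<subseteq> M" "M \<subseteq> topspace Y"
      "menger_space (subtopology Y M)"
    using \<open>locally_menger_at Y (f x)\<close> unfolding locally_menger_at_def by auto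
  define U where "U = {z \<in> topspace X. f z \<in> V}"
  define M' where "M' = {z \<in> topspace X. f z \<in> M}"
  have "proper_map (subtopology X M') (subtopology Y M) f"
    using proper_map_restriction[OF f(2)] unfolding M'_def by simp
  then have "menger_space (subtopology X M')"
    using menger_space_proper_map_preimage VM(5) by auto
  moreover have "openin X U"
    unfolding U_def using openin_continuous_map_preimage[OF f(1) VM(1)] .
  moreover have "x \<in> U" "U \<subseteq> M'" "M' \<subseteq> topspace X"
    unfolding U_def M'_def using x VM(2,3) by auto
  ultimately show ?thesis
    unfolding locally_menger_at_def by (intro exI[of _ U] exI[of _ M']) simp
qed

lemma locally_menger_at_retraction_maps:
  assumes r: "retraction_maps X Y f g" and y: "y \<in> topspace Y"
    and "locally_menger_at X (g y)"
  shows "locally_menger_at Y y"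
proof -
  have f: "continuous_map X Y f" and g: "continuous_map Y X g"
    and fg: "\<And>y. y \<in> topspace Y \<Longrightarrow> f (g y) = y"
    using r unfolding retraction_maps_def by auto
  obtain U M where UM: "openin X U" "g y \<in> U" "U \<subseteq> M" "M \<subseteq> topspace X"
      "menger_space (subtopology X M)"
    using \<open>locally_menger_at X (g y)\<close> unfolding locally_menger_at_def by auto
  define V where "V = {z \<in> topspace Y. g z \<in> U}"
  have fM: "f ` M \<subseteq> topspace Y"
    using UM(4) continuous_map_image_subset_topspace[OF f] by auto
  have "continuous_map (subtopology X M) (subtopology Y (f ` M)) f"
    using continuous_map_from_subtopology[OF f]
    by (simp add: continuous_map_in_subtopology)
  moreover have "f ` topspace (subtopology X M) = topspace (subtopology Y (f ` M))"
    using UM(4) fM by (simp add: Int_absorb1 Int_absorb2)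
  ultimately have "menger_space (subtopology Y (f ` M))"
    using menger_space_continuous_image UM(5) by blast
  moreover have "openin Y V"
    unfolding V_def using openin_continuous_map_preimage[OF g UM(1)] .
  moreover have "V \<subseteq> f ` M"
  proof
    fix z assume "z \<in> V"
    then have "z = f (g z)" "g z \<in> M"
      using fg UM(3) unfolding V_def by auto
    then show "z \<in> f ` M" by blast
  qed
  moreover have "y \<in> V"
    unfolding V_def using y UM(2) by simp
  ultimately show ?thesis
    unfolding locally_menger_at_def using fM by (intro exI[of _ V] exI[of _ "f ` M"]) simp
qed

lemma proper_map_image_non_locally_menger:
  assumes "continuous_map X Y f" "proper_map X Y f"
  shows "f ` non_locally_menger X \<subseteq> non_locally_menger Y"
  using locally_menger_at_proper_map_preimage[OF assms] continuous_map_image_subset_topspace[OF assms(1)]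
  unfolding non_locally_menger_def by auto

lemma retraction_maps_image_non_locally_menger:
  assumes "retraction_maps X Y f g"
  shows "g ` non_locally_menger Y \<subseteq> non_locally_menger X"
  using locally_menger_at_retraction_maps[OF assms]
    continuous_map_image_subset_topspace[of Y X g] assms[unfolded retraction_maps_def]
  unfolding non_locally_menger_def by auto

lemma retraction_maps_homeomorphic_maps_subtopologies:
  assumes r: "retraction_maps X Y f g" and S: "S \<subseteq> g ` topspace Y"
    and "f ` S \<subseteq> T" "g ` T \<subseteq> S"
  shows "homeomorphic_maps (subtopology X S) (subtopology Y T) f g"
proof -
  have "homeomorphic_maps (subtopology X (g ` topspace Y)) Y f g"
    using r unfolding homeomorphic_maps_def retraction_maps_def
    by (auto simp: continuous_map_from_subtopology continuous_map_into_subtopology)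
  then have "homeomorphic_maps (subtopology (subtopology X (g ` topspace Y)) S) (subtopology Y T) f g"
    using assms(3,4) by (intro homeomorphic_maps_subtopologies_alt) auto
  then show ?thesis
    using S by (simp add: subtopology_subtopology Int_absorb1 Int_absorb2)
qed

section \<open>Compactifications and meshing maps\<close>

lemma proper_map_eq:
  assumes "proper_map X Y f" "\<And>x. x \<in> topspace X \<Longrightarrow> f x = g x"
  shows "proper_map X Y g"
proof -
  have "{x \<in> topspace X. g x = y} = {x \<in> topspace X. f x = y}" for y
    using assms(2) by auto
  moreover have "closed_map X Y g"
    using closed_map_eq[of X Y f g, OF _ assms(2)] assms(1) unfolding proper_map_def by simp
  ultimately show ?thesis
    using assms(1) unfolding proper_map_def by simp
qed

lemma compactification_imp_Hausdorff_space:
  assumes "compactification X K e"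
  shows "Hausdorff_space X"
proof -
  have "X homeomorphic_space subtopology K (e ` topspace X)"
    using assms embedding_map_imp_homeomorphic_space unfolding compactification_def by auto
  moreover have "Hausdorff_space (subtopology K (e ` topspace X))"
    using assms Hausdorff_space_subtopology unfolding compactification_def by auto
  ultimately show ?thesis
    by (simp add: homeomorphic_Hausdorff_space)
qed

lemma embedding_map_closure_of_image:
  assumes e: "embedding_map X B e" and A: "A \<subseteq> topspace X"
  shows "{x \<in> topspace X. e x \<in> B closure_of (e ` A)} = X closure_of A"
proof -
  have h: "homeomorphic_map X (subtopology B (e ` topspace X)) e"
    using e unfolding embedding_map_def .
  have "e ` (X closure_of A) = subtopology B (e ` topspace X) closure_of (e ` A)"
    using homeomorphic_map_closure_of[OF h A] by simp
  also have "\<dots> = e ` topspace X \<inter> B closure_of (e ` A)"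
    using A by (simp add: closure_of_subtopology Int_absorb1 image_mono)
  finally have eq: "e ` (X closure_of A) = e ` topspace X \<inter> B closure_of (e ` A)" .
  have inj: "inj_on e (topspace X)"
    using homeomorphic_imp_injective_map[OF h] .
  show ?thesis
  proof (intro equalityI subsetI)
    fix x assume "x \<in> {x \<in> topspace X. e x \<in> B closure_of (e ` A)}"
    then have "x \<in> topspace X" and "e x \<in> e ` (X closure_of A)"
      using eq by auto
    then show "x \<in> X closure_of A"
      using inj_on_image_mem_iff[OF inj _ closure_of_subset_topspace] by blast
  next
    fix x assume x: "x \<in> X closure_of A"
    then have "x \<in> topspace X"
      using closure_of_subset_topspace by (rule subsetD[rotated])
    moreover have "e x \<in> B closure_of (e ` A)"
      using eq x by blast
    ultimately show "x \<in> {x \<in> topspace X. e x \<in> B closure_of (e ` A)}"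
      by simp
  qed
qed

lemma compactification_compact_neighbourhood:
  assumes c: "compactification X K e" and x: "x \<in> topspace X"
    and interior: "e x \<in> K interior_of (e ` topspace X)"
  obtains U C where "openin X U" "compactin X C" "x \<in> U" "U \<subseteq> C"
proof -
  have K: "compact_space K" "Hausdorff_space K"
    and h: "homeomorphic_map X (subtopology K (e ` topspace X)) e"
    using c unfolding compactification_def embedding_map_def by auto
  have e: "continuous_map X K e"
    using homeomorphic_imp_continuous_map[OF h] by (simp add: continuous_map_in_subtopology)
  have base: "neighbourhood_base_of (closedin K) K"
    using compact_Hausdorff_imp_regular_space[OF K] by (rule neighbourhood_base_of_closedin[THEN iffD2])
  obtain W D where WD: "openin K W" "closedin K D" "e x \<in> W" "W \<subseteq> D"
      "D \<subseteq> K interior_of (e ` topspace X)"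
    using base[unfolded neighbourhood_base_of, rule_format, OF conjI[OF openin_interior_of interior]]
    by auto
  have D: "D \<subseteq> e ` topspace X"
    using WD(5) interior_of_subset by (rule subset_trans)
  define U where "U = {z \<in> topspace X. e z \<in> W}"
  define C where "C = {z \<in> topspace X. e z \<in> D}"
  have "openin X U"
    unfolding U_def using openin_continuous_map_preimage[OF e WD(1)] .
  moreover have "e ` C = D"
    unfolding C_def using D by auto
  then have "compactin (subtopology K (e ` topspace X)) (e ` C)"
    using closedin_compact_space[OF K(1) WD(2)] D by (simp add: compactin_subtopology)
  then have "compactin X C"
    using homeomorphic_map_compactness[OF h] unfolding C_def by simp
  moreover have "x \<in> U" "U \<subseteq> C"
    unfolding U_def C_def using x WD(3,4) by auto
  ultimately show ?thesis
    by (rule that)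
qed

locale meshing_map =
  fixes X :: "'a topology" and Y :: "'b topology" and f :: "'a \<Rightarrow> 'b"
    and BX :: "'c topology" and eX :: "'a \<Rightarrow> 'c"
    and CY :: "'d topology" and eY :: "'b \<Rightarrow> 'd" and F :: "'c \<Rightarrow> 'd"
  assumes meshing_data: "meshing_data X Y f BX eX CY eY F"
begin

lemma
  shows continuous: "continuous_map X Y f"
    and compactification_X: "compactification X BX eX"
    and compactification_Y: "compactification Y CY eY"
    and continuous_F: "continuous_map BX CY F"
    and extends: "x \<in> topspace X \<Longrightarrow> F (eX x) = eY (f x)"
    and homeomorphic_remainders:
      "homeomorphic_map (subtopology BX (topspace BX - eX ` topspace X))
                        (subtopology CY (topspace CY - eY ` topspace Y)) F"
  using meshing_data unfolding meshing_data_def by auto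

lemma homeomorphic_embeddings:
  shows "homeomorphic_map X (subtopology BX (eX ` topspace X)) eX"
    and "homeomorphic_map Y (subtopology CY (eY ` topspace Y)) eY"
  using compactification_X compactification_Y
  unfolding compactification_def embedding_map_def by auto

lemma F_preimage_image: "{c \<in> topspace BX. F c \<in> eY ` topspace Y} = eX ` topspace X"
proof (intro equalityI subsetI)
  fix c assume c: "c \<in> {c \<in> topspace BX. F c \<in> eY ` topspace Y}"
  show "c \<in> eX ` topspace X"
  proof (rule ccontr)
    assume "c \<notin> eX ` topspace X"
    then have "F c \<in> topspace CY - eY ` topspace Y"
      using c homeomorphic_imp_surjective_map[OF homeomorphic_remainders] by auto
    then show False
      using c by blast
  qed
next
  fix c assume "c \<in> eX ` topspace X"
  then obtain x where x: "x \<in> topspace X" "c = eX x"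
    by blast
  then have "c \<in> topspace BX"
    using homeomorphic_imp_surjective_map[OF homeomorphic_embeddings(1)] by auto
  moreover have "F c \<in> eY ` topspace Y"
    using x extends continuous_map_image_subset_topspace[OF continuous] by auto
  ultimately show "c \<in> {c \<in> topspace BX. F c \<in> eY ` topspace Y}"
    by simp
qed

lemma F_image_iff:
  assumes "c \<in> topspace BX"
  shows "F c \<in> eY ` topspace Y \<longleftrightarrow> c \<in> eX ` topspace X"
  using assms F_preimage_image[symmetric] by simp

lemma proper: "proper_map X Y f"
proof -
  have "proper_map BX CY F"
    using compactification_X compactification_Y continuous_F
    by (simp add: compactification_def continuous_imp_proper_map Hausdorff_imp_kc_space)
  then have "proper_map (subtopology BX (eX ` topspace X)) (subtopology CY (eY ` topspace Y)) F"
    using F_preimage_image by (rule proper_map_restriction)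
  then have "proper_map X (subtopology CY (eY ` topspace Y)) (F \<circ> eX)"
    using homeomorphic_imp_proper_map[OF homeomorphic_embeddings(1)] proper_map_compose by blast
  then have "proper_map X (subtopology CY (eY ` topspace Y)) (eY \<circ> f)"
    by (rule proper_map_eq) (simp add: extends)
  moreover have "continuous_map Y (subtopology CY (eY ` topspace Y)) eY"
    using homeomorphic_imp_continuous_map[OF homeomorphic_embeddings(2)] .
  ultimately show ?thesis
    using proper_map_from_composition_right compactification_imp_Hausdorff_space[OF compactification_Y]
      continuous by blast
qed

lemma remainder_subset_closure:
  assumes A: "A \<subseteq> topspace X" and fA: "f ` A = topspace Y"
  shows "topspace BX - eX ` topspace X \<subseteq> BX closure_of (eX ` A)"
proof
  fix r assume r: "r \<in> topspace BX - eX ` topspace X"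
  define C where "C = BX closure_of (eX ` A)"
  have BX: "compact_space BX" and CY: "Hausdorff_space CY"
    and dense: "CY closure_of (eY ` topspace Y) = topspace CY"
    using compactification_X compactification_Y unfolding compactification_def by auto
  have "compactin CY (F ` C)"
    unfolding C_def
    using closedin_compact_space[OF BX closedin_closure_of] continuous_F by (rule image_compactin)
  then have "closedin CY (F ` C)"
    using compactin_imp_closedin[OF CY] by blast
  moreover have "eY ` topspace Y \<subseteq> F ` C"
  proof -
    have "eY ` topspace Y = F ` eX ` A"
      using A extends unfolding fA[symmetric] image_image by (auto intro!: image_cong)
    also have "\<dots> \<subseteq> F ` C"
      unfolding C_def using A homeomorphic_imp_surjective_map[OF homeomorphic_embeddings(1)]
      by (intro image_mono closure_of_subset) auto
    finally show ?thesis .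
  qed
  ultimately have "topspace CY \<subseteq> F ` C"
    using closure_of_minimal dense by metis
  moreover have "F r \<in> topspace CY"
    using r continuous_map_image_subset_topspace[OF continuous_F] by blast
  ultimately obtain c where c: "c \<in> C" "F c = F r"
    by (metis imageE subsetD)
  have cBX: "c \<in> topspace BX"
    using c(1) closure_of_subset_topspace unfolding C_def by (rule subsetD[rotated])
  have "F r \<notin> eY ` topspace Y"
    using r F_image_iff by blast
  then have c_rem: "c \<in> topspace BX - eX ` topspace X"
    using F_image_iff[OF cBX] c(2) cBX by simp
  have "inj_on F (topspace BX - eX ` topspace X)"
    using homeomorphic_imp_injective_map[OF homeomorphic_remainders] by (simp add: Int_absorb1)
  then have "c = r"
    using c(2) c_rem r by (rule inj_onD)
  then show "r \<in> BX closure_of (eX ` A)"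
    using c(1) unfolding C_def by simp
qed

lemma non_locally_menger_subset:
  assumes A: "closedin X A" and fA: "f ` A = topspace Y"
  shows "non_locally_menger X \<subseteq> A"
proof
  fix x assume x: "x \<in> non_locally_menger X"
  then have xX: "x \<in> topspace X"
    unfolding non_locally_menger_def by simp
  show "x \<in> A"
  proof (rule ccontr)
    assume "x \<notin> A"
    moreover have "embedding_map X BX eX"
      using compactification_X unfolding compactification_def by simp
    ultimately have "eX x \<notin> BX closure_of (eX ` A)"
      using embedding_map_closure_of_image[of X BX eX A] closure_of_closedin[OF A] closedin_subset[OF A] xX
      by auto
    moreover have "BX closure_of (topspace BX - eX ` topspace X) \<subseteq> BX closure_of (eX ` A)"
      using remainder_subset_closure[OF closedin_subset[OF A] fA] closedin_closure_of
      by (rule closure_of_minimal)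
    moreover have "eX x \<in> topspace BX"
      using xX homeomorphic_imp_surjective_map[OF homeomorphic_embeddings(1)] by auto
    ultimately have "eX x \<in> BX interior_of (eX ` topspace X)"
      unfolding interior_of_closure_of by blast
    then obtain U C where "openin X U" "compactin X C" "x \<in> U" "U \<subseteq> C"
      using compactification_compact_neighbourhood[OF compactification_X xX] by blast
    then have "locally_menger_at X x"
      by (rule locally_menger_at_compact_neighbourhood)
    then show False
      using x unfolding non_locally_menger_def by simp
  qed
qed

end

theorem theorem5p17:
  fixes X :: "'a topology" and Y :: "'b topology" and f :: "'a \<Rightarrow> 'b"
    and BX :: "'c topology" and eX :: "'a \<Rightarrow> 'c"
    and CY :: "'d topology" and eY :: "'b \<Rightarrow> 'd" and F :: "'c \<Rightarrow> 'd"
  assumes "tychonoff_space X" and "tychonoff_space Y" and "P_space Y"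
    and "meshing_data X Y f BX eX CY eY F"
    and "\<exists>g. cross_section X Y f g"
  shows "homeomorphic_map (subtopology X (non_locally_menger X))
                          (subtopology Y (non_locally_menger Y)) f"
proof -
  interpret meshing_map X Y f BX eX CY eY F
    using assms(4) by (rule meshing_map.intro)
  obtain g where r: "retraction_maps X Y f g"
    using assms(5) continuous unfolding cross_section_def retraction_maps_def by auto
  have "closedin X (g ` topspace Y)"
    using compactification_imp_Hausdorff_space[OF compactification_X] retraction_maps_section_image1[OF r]
    by (rule retract_of_space_imp_closedin)
  moreover have "f ` g ` topspace Y = topspace Y"
    using r unfolding retraction_maps_def by (simp add: image_comp)
  ultimately have "non_locally_menger X \<subseteq> g ` topspace Y"
    by (rule non_locally_menger_subset)
  moreover have "f ` non_locally_menger X \<subseteq> non_locally_menger Y"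
    using continuous proper by (rule proper_map_image_non_locally_menger)
  moreover have "g ` non_locally_menger Y \<subseteq> non_locally_menger X"
    using r by (rule retraction_maps_image_non_locally_menger)
  ultimately have "homeomorphic_maps (subtopology X (non_locally_menger X))
                                     (subtopology Y (non_locally_menger Y)) f g"
    by (rule retraction_maps_homeomorphic_maps_subtopologies[OF r])
  then show ?thesis
    unfolding homeomorphic_map_maps by blast
qed

end
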